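(* In the single-block Spice setting, suppose that for every $k\ge1$ the scaling factor satisfies $$\eta_k\ \ge\ \max\Big\{\eta_{k-1}\sqrt{\tfrac{\mathsf{R}(x^k)}{\mathsf{R}(x^{k-1})}},\ \ \eta_{k-1}\,\tfrac{\mathsf{R}(\bar x^k)\sqrt{\mathsf{R}(x^{k-1})}}{\mathsf{R}(\bar x^{k-1})\sqrt{\mathsf{R}(x^k)}}\Big\}.$$ Then (i) $r_k\le r_{k-1}$, $s_k\le s_{k-1}$, hence $H_k\preceq H_{k-1}$ for all $k\ge1$; and (ii) if $w^*\in\Omega$ satisfies $\rho[f(x)-f(x^* )]+(w-w^* )^\top\frac{1}{\eta_j}\Gamma(w^* )\ge0$ for all $w\in\Omega$ and all $j=0,\dots,k$, then $\|w^{k+1}-w^*\|_{H_{k+1}}^2\le\|w^0-w^*\|_{H_0}^2$.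
   Context: Single-block Spice setting. Let $\mathcal{X}\subseteq\mathbb{R}^n$ be nonempty closed convex, $f:\mathbb{R}^n\to\mathbb{R}$ convex, $\phi_1,\dots,\phi_p:\mathbb{R}^n\to\mathbb{R}$ convex and continuously differentiable, $\Phi(x)=(\phi_1(x),\dots,\phi_p(x))^\top$, $\mathcal{D}\Phi(x)\in\mathbb{R}^{p\times n}$ its Jacobian. Let $\mathcal{Z}=\mathbb{R}^p_+$, $\Omega=\mathcal{X}\times\mathcal{Z}$, $w=(x,\lambda)$, $\Gamma(w)=(\mathcal{D}\Phi(x)^\top\lambda,\,-\Phi(x))$. For a symmetric matrix $A$, $\|v\|_A^2:=v^\top A v$; the norm of a matrix is the spectral norm; $\mathsf{R}(x):=\|\mathcal{D}\Phi(x)\|^2$. The scaled Lagrangian is $\mathcal{L}(x,\lambda,\rho,\eta)=\rho f(x)+\frac1\eta\lambda^\top\Phi(x)$. Fix $\rho>0$, $\mu>1$, a starting point $w^0=(x^0,\lambda^0)\in\Omega$ and positive numbers $\eta_0,\eta_1,\dots$. Given $w^k=(x^k,\lambda^k)\in\Omega$, iteration $k$ is: $r_k=\frac{1}{\eta_k}\sqrt{\mathsf{R}(x^k)}$; $\bar x^k=\arg\min_{x\in\mathcal{X}}\{\mathcal{L}(x,\lambda^k,\rho,\eta_k)+\frac{r_k}{2}\|x-x^k\|^2\}$; $s_k=\frac{\mu\,\mathsf{R}(\bar x^k)}{\eta_k\sqrt{\mathsf{R}(x^k)}}$; $\bar\lambda^k=\arg\max_{\lambda\in\mathcal{Z}}\{\mathcal{L}(\bar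 x^k,\lambda,\rho,\eta_k)-\frac{s_k}{2}\|\lambda-\lambda^k\|^2\}$ (equivalently $\bar\lambda^k=\max\{\lambda^k+\frac{1}{\eta_k s_k}\Phi(\bar x^k),0\}$ componentwise); $\bar w^k=(\bar x^k,\bar\lambda^k)$; and $w^{k+1}=w^k-M_k(w^k-\bar w^k)$ where $M_k=\begin{pmatrix}I_n & -\frac{1}{\eta_k r_k}\mathcal{D}\Phi(\bar x^k)^\top\\ 0 & I_p\end{pmatrix}$. It is assumed throughout that $\mathsf{R}(x^k)>0$ and $\mathsf{R}(\bar x^k)>0$ for all $k$. Define $Q_k=\begin{pmatrix} r_kI_n & -\frac{1}{\eta_k}\mathcal{D}\Phi(\bar x^k)^\top\\ 0 & s_kI_p\end{pmatrix}$, $H_k=\begin{pmatrix} r_kI_n&0\\0&s_kI_p\end{pmatrix}$, $G_k=\begin{pmatrix} r_kI_n&0\\0&s_kI_p-\frac{1}{\eta_k^2r_k}\mathcal{D}\Phi(\bar x^k)\mathcal{D}\Phi(\bar x^k)^\top\end{pmatrix}$. *)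

theory Defs
  imports "HOL-Analysis.Analysis"
begin

definition spec_norm :: "real^'n^'m \<Rightarrow> real" where
  "spec_norm A = onorm (\<lambda>v. A *v v)"

text \<open>R(x) = ||D Phi(x)||^2, with J the Jacobian map.\<close>
definition spiceR :: "(real^'n \<Rightarrow> real^'n^'p) \<Rightarrow> real^'n \<Rightarrow> real" where
  "spiceR J x = (spec_norm (J x))\<^sup>2"

definition spiceL :: "(real^'n \<Rightarrow> real) \<Rightarrow> (real^'n \<Rightarrow> real^'p)
    \<Rightarrow> real^'n \<Rightarrow> real^'p \<Rightarrow> real \<Rightarrow> real \<Rightarrow> real" where
  "spiceL f \<Phi> x l \<rho> \<eta> = \<rho> * f x + (1 / \<eta>) * (l \<bullet> \<Phi> x)"

definition nonneg_orthant :: "(real^'p) set" where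
  "nonneg_orthant = {l. \<forall>i. 0 \<le> l $ i}"

text \<open>||(u,v)||_H^2 for H = diag(r I_n, s I_p).\<close>
definition Hnorm2 :: "real \<Rightarrow> real \<Rightarrow> real^'n \<Rightarrow> real^'p \<Rightarrow> real" where
  "Hnorm2 r s u v = r * (norm u)\<^sup>2 + s * (norm v)\<^sup>2"

end

theory Submission
  imports Defs
begin

text \<open>One Spice iteration is a proximal primal step, a proximal dual step and a correction of
  the primal iterate. The first-order optimality conditions of the two proximal subproblems, the
  saddle-point inequality that the variational inequality imposes on \<open>w*\<close>, and the tangent
  inequalities of the convex constraints combine into
  \<open>\<parallel>w(k+1) - w*\<parallel>\<^sub>H\<^sub>k \<le> \<parallel>w(k) - w*\<parallel>\<^sub>H\<^sub>k\<close>. The correction term is absorbed because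
  \<open>s(k) \<ge> R(xbar(k)) / (\<eta>(k)\<^sup>2 r(k))\<close>, i.e. \<open>G\<^sub>k\<close> is positive semidefinite; this is where
  \<open>\<mu> > 1\<close> enters. The growth condition on \<open>\<eta>\<close> makes \<open>r\<close> and \<open>s\<close> nonincreasing, so
  \<open>H\<^sub>k\<^sub>+\<^sub>1 \<preceq> H\<^sub>k\<close> and the one-step estimates telescope.\<close>

lemma power2_norm_add:
  fixes p q :: "'a::real_inner"
  shows "(norm (p + q))\<^sup>2 = (norm p)\<^sup>2 + 2 * (p \<bullet> q) + (norm q)\<^sup>2"
  by (simp add: power2_norm_eq_inner inner_add inner_commute)

lemma has_derivative_difference_quotient_at_right:
  fixes g :: "'a::real_normed_vector \<Rightarrow> real"
  assumes g: "(g has_derivative g') (at x)"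
  shows "((\<lambda>t. (g (x + t *\<^sub>R h) - g x) / t) \<longlongrightarrow> g' h) (at_right 0)"
proof -
  have "((\<lambda>t::real. x + t *\<^sub>R h) has_derivative (\<lambda>t. t *\<^sub>R h)) (at 0)"
    by (auto intro!: derivative_eq_intros)
  from has_derivative_compose[OF this, of g g'] g
  have "((\<lambda>t::real. g (x + t *\<^sub>R h)) has_derivative (\<lambda>t. g' (t *\<^sub>R h))) (at 0)" by simp
  hence "((\<lambda>t::real. g (x + t *\<^sub>R h)) has_field_derivative g' h) (at 0)"
    by (rule has_derivative_imp_has_field_derivative)
      (simp add: linear.scaleR[OF has_derivative_linear[OF g]])
  hence "((\<lambda>t. (g (x + t *\<^sub>R h) - g x) / t) \<longlongrightarrow> g' h) (at 0)"
    unfolding has_field_derivative_iff by simp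
  thus ?thesis by (rule tendsto_mono[OF at_le, rotated]) simp
qed

lemma convex_on_has_derivative_above_tangent:
  fixes g :: "'a::real_normed_vector \<Rightarrow> real"
  assumes convex: "convex_on UNIV g" and g: "(g has_derivative g') (at x)"
  shows "g x + g' (y - x) \<le> g y"
proof -
  have "g' (y - x) \<le> g y - g x"
  proof (rule tendsto_upperbound)
    show "((\<lambda>t. (g (x + t *\<^sub>R (y - x)) - g x) / t) \<longlongrightarrow> g' (y - x)) (at_right 0)"
      by (rule has_derivative_difference_quotient_at_right[OF g])
    show "\<forall>\<^sub>F t in at_right 0. (g (x + t *\<^sub>R (y - x)) - g x) / t \<le> g y - g x"
      unfolding eventually_at_right_field
    proof (intro exI[of _ 1] conjI allI impI)
      fix t :: real assume t: "0 < t" "t < 1"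
      have "g ((1 - t) *\<^sub>R x + t *\<^sub>R y) \<le> (1 - t) * g x + t * g y"
        using t by (intro convex_onD[OF convex]) auto
      moreover have "(1 - t) *\<^sub>R x + t *\<^sub>R y = x + t *\<^sub>R (y - x)" by (simp add: algebra_simps)
      ultimately have "g (x + t *\<^sub>R (y - x)) - g x \<le> t * (g y - g x)" by (simp add: algebra_simps)
      thus "(g (x + t *\<^sub>R (y - x)) - g x) / t \<le> g y - g x"
        using t by (simp add: divide_le_eq mult.commute)
    qed simp
  qed simp
  thus ?thesis by simp
qed

lemma convex_nonneg_orthant: "convex nonneg_orthant"
  unfolding convex_def nonneg_orthant_def by auto

lemma nonneg_orthant_inner_jacobian_le:
  fixes \<Phi> :: "real^'n \<Rightarrow> real^'p"
  assumes convex: "\<forall>i. convex_on UNIV (\<lambda>y. \<Phi> y $ i)"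
    and \<Phi>: "(\<Phi> has_derivative (\<lambda>h. D *v h)) (at x)"
    and l: "l \<in> nonneg_orthant"
  shows "l \<bullet> (D *v (y - x)) \<le> l \<bullet> (\<Phi> y - \<Phi> x)"
  unfolding inner_vec_def inner_real_def
proof (rule sum_mono)
  fix i
  have "((\<lambda>y. \<Phi> y $ i) has_derivative (\<lambda>h. (D *v h) $ i)) (at x)"
    using bounded_linear.has_derivative[OF bounded_linear_vec_nth \<Phi>] .
  from convex_on_has_derivative_above_tangent[OF convex[rule_format] this, of y]
  have "(D *v (y - x)) $ i \<le> (\<Phi> y - \<Phi> x) $ i" by simp
  moreover have "0 \<le> l $ i" using l by (simp add: nonneg_orthant_def)
  ultimately show "l $ i * (D *v (y - x)) $ i \<le> l $ i * (\<Phi> y - \<Phi> x) $ i"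
    by (rule mult_left_mono)
qed

lemma inner_transpose_mult_vector:
  fixes D :: "real^'n^'p"
  shows "x \<bullet> (transpose D *v l) = l \<bullet> (D *v x)"
  by (metis dot_lmul_matrix inner_commute transpose_matrix_vector)

lemma norm_transpose_mult_le_spec_norm:
  fixes D :: "real^'n^'p"
  shows "norm (transpose D *v u) \<le> spec_norm D * norm u"
proof -
  let ?v = "transpose D *v u"
  have D: "bounded_linear (\<lambda>v. D *v v)" by simp
  have "(norm ?v)\<^sup>2 = u \<bullet> (D *v ?v)" by (simp add: power2_norm_eq_inner dot_lmul_matrix)
  also have "\<dots> \<le> norm u * norm (D *v ?v)" by (rule norm_cauchy_schwarz)
  also have "\<dots> \<le> norm u * (spec_norm D * norm ?v)"
    unfolding spec_norm_def by (intro mult_left_mono onorm[OF D]) auto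
  finally have "norm ?v * norm ?v \<le> (spec_norm D * norm u) * norm ?v"
    by (simp add: power2_eq_square algebra_simps)
  moreover have "0 \<le> spec_norm D" unfolding spec_norm_def by (rule onorm_pos_le[OF D])
  ultimately show ?thesis by (cases "norm ?v = 0") auto
qed

text \<open>No sign condition on \<open>r\<close> is needed: the term quadratic in the step length vanishes in
  the limit.\<close>

lemma prox_arg_min_first_order:
  fixes \<psi> :: "'a::real_inner \<Rightarrow> real"
  assumes C: "convex C"
    and z: "is_arg_min (\<lambda>y. \<psi> y + r / 2 * (norm (y - c))\<^sup>2) (\<lambda>y. y \<in> C) z"
    and y: "y \<in> C"
    and quotient_le: "\<And>t. 0 < t \<Longrightarrow> t < 1 \<Longrightarrow> (\<psi> (z + t *\<^sub>R (y - z)) - \<psi> z) / t \<le> Q t"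
    and Q: "(Q \<longlongrightarrow> L) (at_right 0)"
  shows "0 \<le> L + r * ((z - c) \<bullet> (y - z))"
proof -
  define h where "h = y - z"
  have "0 \<le> L + r * ((z - c) \<bullet> h) + 0 * (r / 2 * (norm h)\<^sup>2)"
  proof (rule tendsto_lowerbound)
    show "((\<lambda>t. Q t + r * ((z - c) \<bullet> h) + t * (r / 2 * (norm h)\<^sup>2)) \<longlongrightarrow>
        L + r * ((z - c) \<bullet> h) + 0 * (r / 2 * (norm h)\<^sup>2)) (at_right 0)"
      by (intro tendsto_intros Q)
    show "\<forall>\<^sub>F t in at_right 0. 0 \<le> Q t + r * ((z - c) \<bullet> h) + t * (r / 2 * (norm h)\<^sup>2)"
      unfolding eventually_at_right_field
    proof (intro exI[of _ 1] conjI allI impI)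
      fix t :: real assume t: "0 < t" "t < 1"
      have "z \<in> C" using z by (simp add: is_arg_min_def)
      hence "(1 - t) *\<^sub>R z + t *\<^sub>R y \<in> C" using C y t by (intro convexD) auto
      moreover have "(1 - t) *\<^sub>R z + t *\<^sub>R y = z + t *\<^sub>R h" by (simp add: h_def algebra_simps)
      ultimately have min: "\<psi> z + r / 2 * (norm (z - c))\<^sup>2
          \<le> \<psi> (z + t *\<^sub>R h) + r / 2 * (norm (z + t *\<^sub>R h - c))\<^sup>2"
        using z by (auto simp: is_arg_min_def not_less)
      have "(norm (z + t *\<^sub>R h - c))\<^sup>2 = (norm (z - c))\<^sup>2 + 2 * t * ((z - c) \<bullet> h) + t * t * (norm h)\<^sup>2"
        using power2_norm_add[of "z - c" "t *\<^sub>R h"] by (simp add: algebra_simps power2_eq_square)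
      with min have "0 \<le> ((\<psi> (z + t *\<^sub>R h) - \<psi> z) + t * (r * ((z - c) \<bullet> h) + t * (r / 2 * (norm h)\<^sup>2))) / t"
        using t by (simp add: algebra_simps)
      also have "\<dots> = (\<psi> (z + t *\<^sub>R h) - \<psi> z) / t + r * ((z - c) \<bullet> h) + t * (r / 2 * (norm h)\<^sup>2)"
        using t by (simp add: field_simps)
      finally show "0 \<le> Q t + r * ((z - c) \<bullet> h) + t * (r / 2 * (norm h)\<^sup>2)"
        using quotient_le[OF t] by (simp add: h_def)
    qed simp
  qed simp
  thus ?thesis by (simp add: h_def)
qed

lemma spice_primal_step_optimality:
  fixes X :: "(real^'n) set" and f :: "real^'n \<Rightarrow> real" and \<Phi> :: "real^'n \<Rightarrow> real^'p"
  assumes X: "convex X" and f: "convex_on UNIV f" and \<rho>: "\<rho> \<ge> 0"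
    and \<Phi>: "(\<Phi> has_derivative (\<lambda>h. D *v h)) (at xb)"
    and xb: "is_arg_min (\<lambda>y. spiceL f \<Phi> y l \<rho> \<eta> + r / 2 * (norm (y - x))\<^sup>2) (\<lambda>y. y \<in> X) xb"
    and y: "y \<in> X"
  shows "0 \<le> \<rho> * (f y - f xb) + (1 / \<eta>) * (l \<bullet> (D *v (y - xb))) + r * ((xb - x) \<bullet> (y - xb))"
proof -
  define g where "g z = (1 / \<eta>) * (l \<bullet> \<Phi> z)" for z
  have g: "(g has_derivative (\<lambda>h. (1 / \<eta>) * (l \<bullet> (D *v h)))) (at xb)"
    unfolding g_def
    by (rule bounded_linear.has_derivative[OF bounded_linear_mult_right
          bounded_linear.has_derivative[OF bounded_linear_inner_right \<Phi>]])
  show ?thesis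
  proof (rule prox_arg_min_first_order[OF X _ y,
        where \<psi> = "\<lambda>z. \<rho> * f z + g z"
          and Q = "\<lambda>t. \<rho> * (f y - f xb) + (g (xb + t *\<^sub>R (y - xb)) - g xb) / t"])
    show "is_arg_min (\<lambda>z. \<rho> * f z + g z + r / 2 * (norm (z - x))\<^sup>2) (\<lambda>z. z \<in> X) xb"
      using xb by (simp add: spiceL_def g_def)
    show "((\<lambda>t. \<rho> * (f y - f xb) + (g (xb + t *\<^sub>R (y - xb)) - g xb) / t) \<longlongrightarrow>
        \<rho> * (f y - f xb) + (1 / \<eta>) * (l \<bullet> (D *v (y - xb)))) (at_right 0)"
      by (intro tendsto_intros has_derivative_difference_quotient_at_right[OF g])
  next
    fix t :: real assume t: "0 < t" "t < 1"
    have "f ((1 - t) *\<^sub>R xb + t *\<^sub>R y) \<le> (1 - t) * f xb + t * f y"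
      using t by (intro convex_onD[OF f]) auto
    moreover have "(1 - t) *\<^sub>R xb + t *\<^sub>R y = xb + t *\<^sub>R (y - xb)" by (simp add: algebra_simps)
    ultimately have "\<rho> * f (xb + t *\<^sub>R (y - xb)) \<le> \<rho> * ((1 - t) * f xb + t * f y)"
      by (metis mult_left_mono \<rho>)
    hence "\<rho> * f (xb + t *\<^sub>R (y - xb)) - \<rho> * f xb \<le> t * (\<rho> * (f y - f xb))"
      by (simp add: algebra_simps)
    with t have "(\<rho> * f (xb + t *\<^sub>R (y - xb)) - \<rho> * f xb) / t \<le> \<rho> * (f y - f xb)"
      by (simp add: divide_le_eq mult.commute)
    then show "(\<rho> * f (xb + t *\<^sub>R (y - xb)) + g (xb + t *\<^sub>R (y - xb)) - (\<rho> * f xb + g xb)) / t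
        \<le> \<rho> * (f y - f xb) + (g (xb + t *\<^sub>R (y - xb)) - g xb) / t"
      by (simp add: diff_divide_distrib add_divide_distrib)
  qed
qed

lemma spice_dual_step_optimality:
  fixes f :: "real^'n \<Rightarrow> real" and \<Phi> :: "real^'n \<Rightarrow> real^'p"
  assumes lb: "is_arg_max (\<lambda>l. spiceL f \<Phi> xb l \<rho> \<eta> - s / 2 * (norm (l - lam))\<^sup>2)
          (\<lambda>l. l \<in> nonneg_orthant) lb"
    and l: "l \<in> nonneg_orthant"
  shows "(1 / \<eta>) * ((l - lb) \<bullet> \<Phi> xb) \<le> s * ((lb - lam) \<bullet> (l - lb))"
proof -
  have "is_arg_min (\<lambda>l. - spiceL f \<Phi> xb l \<rho> \<eta> + s / 2 * (norm (l - lam))\<^sup>2)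
      (\<lambda>l. l \<in> nonneg_orthant) lb"
    using lb by (auto simp: is_arg_max_def is_arg_min_def)
  then have "0 \<le> - (1 / \<eta>) * ((l - lb) \<bullet> \<Phi> xb) + s * ((lb - lam) \<bullet> (l - lb))"
    by (rule prox_arg_min_first_order[OF convex_nonneg_orthant _ l,
          where Q = "\<lambda>_. - (1 / \<eta>) * ((l - lb) \<bullet> \<Phi> xb)"])
      (auto simp: spiceL_def inner_add_left inner_diff_left field_simps add_divide_distrib diff_divide_distrib)
  then show ?thesis by simp
qed

lemma spice_saddle_point:
  fixes X :: "(real^'n) set" and f :: "real^'n \<Rightarrow> real" and \<Phi> :: "real^'n \<Rightarrow> real^'p"
  assumes convex: "\<forall>i. convex_on UNIV (\<lambda>y. \<Phi> y $ i)"
    and \<Phi>: "(\<Phi> has_derivative (\<lambda>h. D *v h)) (at xs)"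
    and \<eta>: "\<eta> > 0" and xs: "xs \<in> X" and ls: "ls \<in> nonneg_orthant"
    and VI: "\<forall>y\<in>X. \<forall>l\<in>nonneg_orthant.
               \<rho> * (f y - f xs)
               + (y - xs) \<bullet> ((1 / \<eta>) *\<^sub>R (transpose (D) *v ls))
               + (l - ls) \<bullet> ((1 / \<eta>) *\<^sub>R (- \<Phi> xs)) \<ge> 0"
    and y: "y \<in> X" and l: "l \<in> nonneg_orthant"
  shows "spiceL f \<Phi> xs l \<rho> \<eta> \<le> spiceL f \<Phi> y ls \<rho> \<eta>"
proof -
  have "0 \<le> (l - ls) \<bullet> ((1 / \<eta>) *\<^sub>R (- \<Phi> xs))"
    using VI xs l by fastforce
  hence "(1 / \<eta>) * (l \<bullet> \<Phi> xs) \<le> (1 / \<eta>) * (ls \<bullet> \<Phi> xs)"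
    by (simp add: inner_diff_left diff_divide_distrib)
  moreover have "0 \<le> \<rho> * (f y - f xs) + (y - xs) \<bullet> ((1 / \<eta>) *\<^sub>R (transpose (D) *v ls))"
    using VI y ls by fastforce
  hence "0 \<le> \<rho> * (f y - f xs) + (1 / \<eta>) * (ls \<bullet> (D *v (y - xs)))"
    unfolding inner_scaleR_right inner_transpose_mult_vector .
  moreover have "(1 / \<eta>) * (ls \<bullet> (D *v (y - xs))) \<le> (1 / \<eta>) * (ls \<bullet> (\<Phi> y - \<Phi> xs))"
    using nonneg_orthant_inner_jacobian_le[OF convex \<Phi> ls, of y] \<eta> by (simp add: divide_right_mono)
  ultimately show ?thesis
    by (simp add: spiceL_def inner_diff_right algebra_simps)
qed

lemma spice_cross_term_le:
  fixes X :: "(real^'n) set" and f :: "real^'n \<Rightarrow> real" and \<Phi> :: "real^'n \<Rightarrow> real^'p"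
    and J :: "real^'n \<Rightarrow> real^'n^'p"
  assumes X: "convex X" and f: "convex_on UNIV f"
    and \<Phi>_convex: "\<forall>i. convex_on UNIV (\<lambda>y. \<Phi> y $ i)"
    and \<Phi>_deriv: "\<forall>y. (\<Phi> has_derivative (\<lambda>h. J y *v h)) (at y)"
    and \<rho>: "\<rho> \<ge> 0" and \<eta>: "\<eta> > 0"
    and xb: "is_arg_min (\<lambda>y. spiceL f \<Phi> y lam \<rho> \<eta> + r / 2 * (norm (y - x))\<^sup>2) (\<lambda>y. y \<in> X) xb"
    and lb: "is_arg_max (\<lambda>l. spiceL f \<Phi> xb l \<rho> \<eta> - s / 2 * (norm (l - lam))\<^sup>2)
          (\<lambda>l. l \<in> nonneg_orthant) lb"
    and xs: "xs \<in> X" and ls: "ls \<in> nonneg_orthant"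
    and VI: "\<forall>y\<in>X. \<forall>l\<in>nonneg_orthant.
               \<rho> * (f y - f xs)
               + (y - xs) \<bullet> ((1 / \<eta>) *\<^sub>R (transpose (J xs) *v ls))
               + (l - ls) \<bullet> ((1 / \<eta>) *\<^sub>R (- \<Phi> xs)) \<ge> 0"
  shows "(1 / \<eta>) * ((lam - lb) \<bullet> (J xb *v (xb - xs)))
    \<le> r * ((x - xb) \<bullet> (xb - xs)) + s * ((lam - lb) \<bullet> (lb - ls))"
proof -
  have xbX: "xb \<in> X" using xb by (simp add: is_arg_min_def)
  have lbZ: "lb \<in> nonneg_orthant" using lb by (simp add: is_arg_max_def)
  have primal: "0 \<le> \<rho> * (f xs - f xb) + (1 / \<eta>) * (lam \<bullet> (J xb *v (xs - xb)))
      + r * ((xb - x) \<bullet> (xs - xb))"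
    using spice_primal_step_optimality[OF X f \<rho> \<Phi>_deriv[rule_format, of xb] xb xs] .
  have dual: "(1 / \<eta>) * ((ls - lb) \<bullet> \<Phi> xb) \<le> s * ((lb - lam) \<bullet> (ls - lb))"
    using spice_dual_step_optimality[OF lb ls] .
  have saddle: "spiceL f \<Phi> xs lb \<rho> \<eta> \<le> spiceL f \<Phi> xb ls \<rho> \<eta>"
    using spice_saddle_point[OF \<Phi>_convex \<Phi>_deriv[rule_format, of xs] \<eta> xs ls VI xbX lbZ] .
  have tangent: "(1 / \<eta>) * (lb \<bullet> (J xb *v (xs - xb))) \<le> (1 / \<eta>) * (lb \<bullet> (\<Phi> xs - \<Phi> xb))"
    using nonneg_orthant_inner_jacobian_le[OF \<Phi>_convex \<Phi>_deriv[rule_format, of xb] lbZ, of xs] \<eta>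
    by (simp add: divide_right_mono)
  show ?thesis
    using primal dual saddle tangent
    by (simp add: spiceL_def algebra_simps inner_diff_left inner_diff_right
        matrix_vector_mult_diff_distrib)
qed

lemma spice_correction_norm_le:
  fixes D :: "real^'n^'p"
  assumes r: "r > 0" and \<eta>: "\<eta> > 0" and D: "(spec_norm D)\<^sup>2 \<le> \<eta>\<^sup>2 * r * s"
  shows "r * (norm ((1 / (\<eta> * r)) *\<^sub>R (transpose D *v u)))\<^sup>2 \<le> s * (norm u)\<^sup>2"
proof -
  have "(norm (transpose D *v u))\<^sup>2 \<le> (spec_norm D * norm u)\<^sup>2"
    by (intro power_mono norm_transpose_mult_le_spec_norm) simp
  also have "\<dots> \<le> (\<eta>\<^sup>2 * r * s) * (norm u)\<^sup>2"
    unfolding power_mult_distrib by (intro mult_right_mono D) simp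
  finally have "(norm (transpose D *v u))\<^sup>2 / (\<eta>\<^sup>2 * r) \<le> s * (norm u)\<^sup>2"
    using r \<eta> by (simp add: divide_le_eq algebra_simps)
  moreover have "r * (norm ((1 / (\<eta> * r)) *\<^sub>R (transpose D *v u)))\<^sup>2
      = (norm (transpose D *v u))\<^sup>2 / (\<eta>\<^sup>2 * r)"
    using r \<eta> by (simp add: power2_eq_square field_simps)
  ultimately show ?thesis by simp
qed

lemma spice_step_descent:
  fixes X :: "(real^'n) set" and f :: "real^'n \<Rightarrow> real" and \<Phi> :: "real^'n \<Rightarrow> real^'p"
    and J :: "real^'n \<Rightarrow> real^'n^'p"
  assumes X: "convex X" and f: "convex_on UNIV f"
    and \<Phi>_convex: "\<forall>i. convex_on UNIV (\<lambda>y. \<Phi> y $ i)"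
    and \<Phi>_deriv: "\<forall>y. (\<Phi> has_derivative (\<lambda>h. J y *v h)) (at y)"
    and \<rho>: "\<rho> \<ge> 0" and \<eta>: "\<eta> > 0" and r: "r > 0"
    and G: "spiceR J xb \<le> \<eta>\<^sup>2 * r * s"
    and xb: "is_arg_min (\<lambda>y. spiceL f \<Phi> y lam \<rho> \<eta> + r / 2 * (norm (y - x))\<^sup>2) (\<lambda>y. y \<in> X) xb"
    and lb: "is_arg_max (\<lambda>l. spiceL f \<Phi> xb l \<rho> \<eta> - s / 2 * (norm (l - lam))\<^sup>2)
          (\<lambda>l. l \<in> nonneg_orthant) lb"
    and xs: "xs \<in> X" and ls: "ls \<in> nonneg_orthant"
    and VI: "\<forall>y\<in>X. \<forall>l\<in>nonneg_orthant.
               \<rho> * (f y - f xs)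
               + (y - xs) \<bullet> ((1 / \<eta>) *\<^sub>R (transpose (J xs) *v ls))
               + (l - ls) \<bullet> ((1 / \<eta>) *\<^sub>R (- \<Phi> xs)) \<ge> 0"
  shows "Hnorm2 r s (xb + (1 / (\<eta> * r)) *\<^sub>R (transpose (J xb) *v (lam - lb)) - xs) (lb - ls)
    \<le> Hnorm2 r s (x - xs) (lam - ls)"
proof -
  define d where "d = (1 / (\<eta> * r)) *\<^sub>R (transpose (J xb) *v (lam - lb))"
  have "r * ((xb - xs) \<bullet> d) = (1 / \<eta>) * ((lam - lb) \<bullet> (J xb *v (xb - xs)))"
    using r unfolding d_def inner_scaleR_right inner_transpose_mult_vector by simp
  also have "\<dots> \<le> r * ((x - xb) \<bullet> (xb - xs)) + s * ((lam - lb) \<bullet> (lb - ls))"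
    by (rule spice_cross_term_le[OF X f \<Phi>_convex \<Phi>_deriv \<rho> \<eta> xb lb xs ls VI])
  finally have cross: "r * ((xb - xs) \<bullet> d) \<le> r * ((x - xb) \<bullet> (xb - xs)) + s * ((lam - lb) \<bullet> (lb - ls))" .
  have correction: "r * (norm d)\<^sup>2 \<le> s * (norm (lam - lb))\<^sup>2"
    unfolding d_def using G r \<eta> by (intro spice_correction_norm_le) (auto simp: spiceR_def)
  have "xb + d - xs = (xb - xs) + d" "x - xs = (x - xb) + (xb - xs)"
    "lam - ls = (lam - lb) + (lb - ls)"
    by (simp_all add: algebra_simps)
  then have "r * (norm (xb + d - xs))\<^sup>2
      = r * (norm (xb - xs))\<^sup>2 + 2 * (r * ((xb - xs) \<bullet> d)) + r * (norm d)\<^sup>2"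
    "r * (norm (x - xs))\<^sup>2
      = r * (norm (x - xb))\<^sup>2 + 2 * (r * ((x - xb) \<bullet> (xb - xs))) + r * (norm (xb - xs))\<^sup>2"
    "s * (norm (lam - ls))\<^sup>2
      = s * (norm (lam - lb))\<^sup>2 + 2 * (s * ((lam - lb) \<bullet> (lb - ls))) + s * (norm (lb - ls))\<^sup>2"
    by (simp_all only: power2_norm_add) (simp_all add: ring_distribs mult.left_commute)
  moreover have "0 \<le> r * (norm (x - xb))\<^sup>2" using r by simp
  ultimately show ?thesis
    using cross correction unfolding Hnorm2_def d_def[symmetric] by linarith
qed

lemma divide_le_divide_of_scale_growth:
  fixes c c' \<eta> \<eta>' :: real
  assumes "0 \<le> c" "0 < c'" "0 < \<eta>'" "\<eta>' * (c / c') \<le> \<eta>" "0 < \<eta>"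
  shows "c / \<eta> \<le> c' / \<eta>'"
  using assms by (simp add: field_simps)

lemma spice_stepsizes_antimono:
  fixes R R' B B' \<eta> \<eta>' \<mu> :: real
  assumes R: "0 < R" "0 < R'" and B: "0 \<le> B" "0 < B'" and \<eta>: "0 < \<eta>" "0 < \<eta>'"
    and \<mu>: "0 < \<mu>"
    and growth_r: "\<eta>' * sqrt (R / R') \<le> \<eta>"
    and growth_s: "\<eta>' * (B * sqrt R') / (B' * sqrt R) \<le> \<eta>"
  shows "1 / \<eta> * sqrt R \<le> 1 / \<eta>' * sqrt R'"
    and "\<mu> * B / (\<eta> * sqrt R) \<le> \<mu> * B' / (\<eta>' * sqrt R')"
proof -
  show "1 / \<eta> * sqrt R \<le> 1 / \<eta>' * sqrt R'"
    using divide_le_divide_of_scale_growth[of "sqrt R" "sqrt R'" \<eta>' \<eta>] R \<eta> growth_r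
    by (simp add: real_sqrt_divide)
  have "\<eta>' * ((\<mu> * B / sqrt R) / (\<mu> * B' / sqrt R')) \<le> \<eta>"
    using growth_s R B \<mu> by (simp add: field_simps)
  then show "\<mu> * B / (\<eta> * sqrt R) \<le> \<mu> * B' / (\<eta>' * sqrt R')"
    using divide_le_divide_of_scale_growth[of "\<mu> * B / sqrt R" "\<mu> * B' / sqrt R'" \<eta>' \<eta>] R B \<eta> \<mu>
    by (simp add: field_simps)
qed

lemma spice_correction_dominated:
  fixes R B \<eta> \<mu> :: real
  assumes "0 < R" "0 \<le> B" "0 < \<eta>" "1 \<le> \<mu>"
  shows "B \<le> \<eta>\<^sup>2 * (1 / \<eta> * sqrt R) * (\<mu> * B / (\<eta> * sqrt R))"
proof -
  have "\<eta>\<^sup>2 * (1 / \<eta> * sqrt R) * (\<mu> * B / (\<eta> * sqrt R)) = \<mu> * B"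
    using assms by (simp add: field_simps power2_eq_square)
  then show ?thesis using assms by (simp add: mult_le_cancel_right1)
qed

lemma Hnorm2_mono:
  assumes "r \<le> r'" "s \<le> s'"
  shows "Hnorm2 r s u v \<le> Hnorm2 r' s' u v"
  unfolding Hnorm2_def using assms by (intro add_mono mult_right_mono) auto

theorem lemma3p3:
  fixes X :: "(real^'n) set"
    and f :: "real^'n \<Rightarrow> real"
    and \<Phi> :: "real^'n \<Rightarrow> real^'p"
    and J :: "real^'n \<Rightarrow> real^'n^'p"
    and \<rho> \<mu> :: real
    and \<eta> :: "nat \<Rightarrow> real"
    and x xbar :: "nat \<Rightarrow> real^'n"
    and lam lambar :: "nat \<Rightarrow> real^'p"
    and r s :: "nat \<Rightarrow> real"
  assumes X_ne: "X \<noteq> {}" and X_closed: "closed X" and X_convex: "convex X"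
    and f_convex: "convex_on UNIV f"
    and \<Phi>_convex: "\<forall>i. convex_on UNIV (\<lambda>y. \<Phi> y $ i)"
    and \<Phi>_deriv: "\<forall>y. (\<Phi> has_derivative (\<lambda>h. J y *v h)) (at y)"
    and J_cont: "continuous_on UNIV J"
    and \<rho>_pos: "\<rho> > 0" and \<mu>_gt: "\<mu> > 1"
    and \<eta>_pos: "\<forall>k. \<eta> k > 0"
    and x0: "x 0 \<in> X" and lam0: "lam 0 \<in> nonneg_orthant"
    and R_pos: "\<forall>k. spiceR J (x k) > 0" and Rbar_pos: "\<forall>k. spiceR J (xbar k) > 0"
    and r_def: "\<forall>k. r k = (1 / \<eta> k) * sqrt (spiceR J (x k))"
    and xbar_def: "\<forall>k. is_arg_min
          (\<lambda>y. spiceL f \<Phi> y (lam k) \<rho> (\<eta> k) + r k / 2 * (norm (y - x k))\<^sup>2)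
          (\<lambda>y. y \<in> X) (xbar k)"
    and s_def: "\<forall>k. s k = \<mu> * spiceR J (xbar k) / (\<eta> k * sqrt (spiceR J (x k)))"
    and lambar_def: "\<forall>k. is_arg_max
          (\<lambda>l. spiceL f \<Phi> (xbar k) l \<rho> (\<eta> k) - s k / 2 * (norm (l - lam k))\<^sup>2)
          (\<lambda>l. l \<in> nonneg_orthant) (lambar k)"
    and x_upd: "\<forall>k. x (Suc k) = x k - ((x k - xbar k)
          - (1 / (\<eta> k * r k)) *\<^sub>R (transpose (J (xbar k)) *v (lam k - lambar k)))"
    and lam_upd: "\<forall>k. lam (Suc k) = lam k - (lam k - lambar k)"
    and \<eta>_grow: "\<forall>k\<ge>1. \<eta> k \<ge> max
          (\<eta> (k - 1) * sqrt (spiceR J (x k) / spiceR J (x (k - 1))))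
          (\<eta> (k - 1) * (spiceR J (xbar k) * sqrt (spiceR J (x (k - 1))))
             / (spiceR J (xbar (k - 1)) * sqrt (spiceR J (x k))))"
  shows "(\<forall>k\<ge>1. r k \<le> r (k - 1) \<and> s k \<le> s (k - 1)
            \<and> (\<forall>(u::real^'n) (v::real^'p). Hnorm2 (r k) (s k) u v \<le> Hnorm2 (r (k - 1)) (s (k - 1)) u v))
       \<and> (\<forall>k xs ls. xs \<in> X \<and> ls \<in> nonneg_orthant \<and>
            (\<forall>j\<le>k. \<forall>y\<in>X. \<forall>l\<in>nonneg_orthant.
               \<rho> * (f y - f xs)
               + (y - xs) \<bullet> ((1 / \<eta> j) *\<^sub>R (transpose (J xs) *v ls))
               + (l - ls) \<bullet> ((1 / \<eta> j) *\<^sub>R (- \<Phi> xs)) \<ge> 0)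
          \<longrightarrow> Hnorm2 (r (Suc k)) (s (Suc k)) (x (Suc k) - xs) (lam (Suc k) - ls)
              \<le> Hnorm2 (r 0) (s 0) (x 0 - xs) (lam 0 - ls))"
proof -
  \<comment> \<open>\<open>X_ne\<close>, \<open>X_closed\<close>, \<open>J_cont\<close>, \<open>x0\<close> and \<open>lam0\<close> only make the iteration well defined;
    the iterates are given here, so the estimates do not use them.\<close>
  have r_pos: "r k > 0" for k using r_def R_pos \<eta>_pos by simp
  have stepsizes: "r k \<le> r (k - 1) \<and> s k \<le> s (k - 1)" if "k \<ge> 1" for k
    using spice_stepsizes_antimono[of "spiceR J (x k)" "spiceR J (x (k - 1))"
        "spiceR J (xbar k)" "spiceR J (xbar (k - 1))" "\<eta> k" "\<eta> (k - 1)" \<mu>]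
      R_pos Rbar_pos \<eta>_pos \<mu>_gt \<eta>_grow that r_def s_def
    by (simp add: less_imp_le)
  have descent: "Hnorm2 (r (Suc j)) (s (Suc j)) (x (Suc j) - xs) (lam (Suc j) - ls)
      \<le> Hnorm2 (r j) (s j) (x j - xs) (lam j - ls)"
    if xs: "xs \<in> X" and ls: "ls \<in> nonneg_orthant"
      and VI: "\<forall>y\<in>X. \<forall>l\<in>nonneg_orthant. \<rho> * (f y - f xs)
               + (y - xs) \<bullet> ((1 / \<eta> j) *\<^sub>R (transpose (J xs) *v ls))
               + (l - ls) \<bullet> ((1 / \<eta> j) *\<^sub>R (- \<Phi> xs)) \<ge> 0" for j xs ls
  proof -
    have "spiceR J (xbar j) \<le> (\<eta> j)\<^sup>2 * r j * s j"
      unfolding r_def[rule_format] s_def[rule_format]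
      using R_pos Rbar_pos \<eta>_pos \<mu>_gt by (intro spice_correction_dominated) (auto intro: less_imp_le)
    from spice_step_descent[OF X_convex f_convex \<Phi>_convex \<Phi>_deriv _ \<eta>_pos[rule_format] r_pos
        this xbar_def[rule_format] lambar_def[rule_format] xs ls VI] \<rho>_pos x_upd lam_upd
    have "Hnorm2 (r j) (s j) (x (Suc j) - xs) (lam (Suc j) - ls) \<le> Hnorm2 (r j) (s j) (x j - xs) (lam j - ls)"
      by simp
    moreover have "r (Suc j) \<le> r j" "s (Suc j) \<le> s j" using stepsizes[of "Suc j"] by simp_all
    ultimately show ?thesis by (meson Hnorm2_mono order_trans)
  qed
  show ?thesis
  proof (rule conjI; intro allI impI)
    fix k :: nat assume "k \<ge> 1"
    then have "r k \<le> r (k - 1)" "s k \<le> s (k - 1)" using stepsizes by blast+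
    then show "r k \<le> r (k - 1) \<and> s k \<le> s (k - 1)
        \<and> (\<forall>(u::real^'n) (v::real^'p). Hnorm2 (r k) (s k) u v \<le> Hnorm2 (r (k - 1)) (s (k - 1)) u v)"
      by (simp add: Hnorm2_mono)
  next
    fix k xs ls assume "xs \<in> X \<and> ls \<in> nonneg_orthant \<and> (\<forall>j\<le>k. \<forall>y\<in>X. \<forall>l\<in>nonneg_orthant.
               \<rho> * (f y - f xs) + (y - xs) \<bullet> ((1 / \<eta> j) *\<^sub>R (transpose (J xs) *v ls))
               + (l - ls) \<bullet> ((1 / \<eta> j) *\<^sub>R (- \<Phi> xs)) \<ge> 0)"
    then have "Hnorm2 (r (Suc j)) (s (Suc j)) (x (Suc j) - xs) (lam (Suc j) - ls)
        \<le> Hnorm2 (r j) (s j) (x j - xs) (lam j - ls)" if "j \<in> {..k}" for j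
      using that by (intro descent) auto
    then show "Hnorm2 (r (Suc k)) (s (Suc k)) (x (Suc k) - xs) (lam (Suc k) - ls)
        \<le> Hnorm2 (r 0) (s 0) (x 0 - xs) (lam 0 - ls)"
      by (rule lift_Suc_antimono_le_ivl[where f = "\<lambda>j. Hnorm2 (r j) (s j) (x j - xs) (lam j - ls)"
          and N = "{..k}"]) auto
  qed
qed

end
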